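(* Let $\mathcal{E}:\mathcal{S}(\mathcal{H}_1)\otimes\mathcal{S}(\mathcal{H}_2)\to\mathcal{S}(\mathcal{H}_1)$ be any channel such that $\Delta\circ\mathcal{E}\circ\Delta=\Delta\circ\mathcal{E}$, where $\Delta(\rho)=\sum_x|x\rangle\langle x|\rho|x\rangle\langle x|$ is the dephasing map in the computational basis. Then for any state $\tau\in\mathcal{S}(\mathcal{H}_2)$, the channel $\mathcal{E}_\tau(\rho):=\mathcal{E}(\rho\otimes\tau)$ cannot implement any coherent unitary exactly.
   Context: A unitary is incoherent if it has the form $\sum_x e^{i\theta_x}|\pi(x)\rangle\langle x|$ for real $\theta_x$ and a permutation $\pi$; otherwise it is coherent. $\mathcal{S}(\mathcal{H})$ denotes the set of density operators on $\mathcal{H}$. *)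

theory Defs
  imports "Jordan_Normal_Form.Matrix"
begin

text \<open>The composite system H1 (x) H2 is indexed by i1 * n2 + i2 (Kronecker ordering).\<close>

definition dagger :: "complex mat \<Rightarrow> complex mat" where
  "dagger A = mat (dim_col A) (dim_row A) (\<lambda>(i,j). cnj (A $$ (j,i)))"

definition tr :: "complex mat \<Rightarrow> complex" where
  "tr A = (\<Sum>i<dim_row A. A $$ (i,i))"

definition psd :: "nat \<Rightarrow> complex mat \<Rightarrow> bool" where
  "psd n A \<longleftrightarrow> A \<in> carrier_mat n n \<and>
     (\<forall>v \<in> carrier_vec n. Im (scalar_prod (map_vec cnj v) (A *\<^sub>v v)) = 0 \<and> 0 \<le> Re (scalar_prod (map_vec cnj v) (A *\<^sub>v v)))"

definition density :: "nat \<Rightarrow> complex mat \<Rightarrow> bool" where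
  "density n \<rho> \<longleftrightarrow> psd n \<rho> \<and> tr \<rho> = 1"

definition kron :: "complex mat \<Rightarrow> complex mat \<Rightarrow> complex mat" where
  "kron A B = mat (dim_row A * dim_row B) (dim_col A * dim_col B)
     (\<lambda>(i,j). A $$ (i div dim_row B, j div dim_col B) * B $$ (i mod dim_row B, j mod dim_col B))"

definition dephase :: "nat \<Rightarrow> complex mat \<Rightarrow> complex mat" where
  "dephase n A = mat n n (\<lambda>(i,j). if i = j then A $$ (i,i) else 0)"

text \<open>(id_k (x) E)(X) for a map E from n x n to m x m matrices, ancilla of dimension k
  (ancilla index first).\<close>
definition id_tensor :: "nat \<Rightarrow> nat \<Rightarrow> nat \<Rightarrow> (complex mat \<Rightarrow> complex mat) \<Rightarrow> complex mat \<Rightarrow> complex mat" where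
  "id_tensor k n m E X = mat (k * m) (k * m)
     (\<lambda>(i,j). E (mat n n (\<lambda>(p,q). X $$ ((i div m) * n + p, (j div m) * n + q))) $$ (i mod m, j mod m))"

definition channel :: "nat \<Rightarrow> nat \<Rightarrow> (complex mat \<Rightarrow> complex mat) \<Rightarrow> bool" where
  "channel n m E \<longleftrightarrow>
     (\<forall>A \<in> carrier_mat n n. E A \<in> carrier_mat m m) \<and>
     (\<forall>A \<in> carrier_mat n n. \<forall>B \<in> carrier_mat n n. E (A + B) = E A + E B) \<and>
     (\<forall>A \<in> carrier_mat n n. \<forall>c. E (c \<cdot>\<^sub>m A) = c \<cdot>\<^sub>m E A) \<and>
     (\<forall>A \<in> carrier_mat n n. tr (E A) = tr A) \<and>
     (\<forall>k X. psd (k * n) X \<longrightarrow> psd (k * m) (id_tensor k n m E X))"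

definition unitary :: "nat \<Rightarrow> complex mat \<Rightarrow> bool" where
  "unitary n U \<longleftrightarrow> U \<in> carrier_mat n n \<and> U * dagger U = 1\<^sub>m n"

definition incoherent_unitary :: "nat \<Rightarrow> complex mat \<Rightarrow> bool" where
  "incoherent_unitary n U \<longleftrightarrow>
     (\<exists>(\<pi>::nat \<Rightarrow> nat) (\<theta>::nat \<Rightarrow> real). bij_betw \<pi> {..<n} {..<n} \<and>
        U = mat n n (\<lambda>(i,j). if i = \<pi> j then exp (\<i> * complex_of_real (\<theta> j)) else 0))"

definition coherent_unitary :: "nat \<Rightarrow> complex mat \<Rightarrow> bool" where
  "coherent_unitary n U \<longleftrightarrow> unitary n U \<and> \<not> incoherent_unitary n U"

end

theory Submission
  imports Defs
begin

(* If E(. (x) tau) implemented U, the covariance Delta o E o Delta = Delta o E would make the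
   output populations, the diagonal of U rho U^dagger, depend only on the input populations,
   the diagonal of rho. Feeding the probe states (|a> + c|b>)/sqrt 2 and (|a> - c|b>)/sqrt 2,
   which have equal populations, gives |u + c v| = |u - c v| for the entries u = U_ya and
   v = U_yb of any row; with c = 1 and c = i, polarization yields u * conj v = 0. Hence every
   row of U has exactly one nonzero entry, and a unitary of that shape is a permutation matrix
   with phases, i.e. incoherent. *)

lemma sum_lessThan_mult_nat:
  fixes f :: "nat \<Rightarrow> 'a::comm_monoid_add"
  shows "(\<Sum>p<n * m. f p) = (\<Sum>i<n. \<Sum>k<m. f (i * m + k))"
proof -
  have "(\<Sum>k<m. f (i * m + k)) = sum f {i * m..<i * m + m}" for i
    using sum.shift_bounds_nat_ivl[of f 0 "i * m" m] by (simp add: atLeast0LessThan add.commute)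
  then show ?thesis by (simp add: sum.nat_group)
qed

lemma mult_add_less_mult_nat:
  fixes i k n m :: nat
  assumes "i < n" "k < m"
  shows "i * m + k < n * m"
proof -
  have "i * m + k < Suc i * m" using assms(2) by simp
  also have "\<dots> \<le> n * m" using assms(1) by (intro mult_le_mono1) simp
  finally show ?thesis .
qed

lemma quadratic_form_eq:
  assumes "A \<in> carrier_mat n n" "v \<in> carrier_vec n"
  shows "scalar_prod (map_vec cnj v) (A *\<^sub>v v) = (\<Sum>p<n. \<Sum>q<n. cnj (v $ p) * A $$ (p, q) * v $ q)"
  using assms
  by (auto simp: scalar_prod_def atLeast0LessThan sum_distrib_left mult.assoc intro!: sum.cong)

lemma kron_index:
  assumes "A \<in> carrier_mat n n'" "B \<in> carrier_mat m m'" "i < n" "j < n'" "k < m" "l < m'"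
  shows "kron A B $$ (i * m + k, j * m' + l) = A $$ (i, j) * B $$ (k, l)"
  using assms mult_add_less_mult_nat[of i n k m] mult_add_less_mult_nat[of j n' l m']
  by (simp add: kron_def)

lemma kron_carrier:
  "A \<in> carrier_mat n n' \<Longrightarrow> B \<in> carrier_mat m m' \<Longrightarrow> kron A B \<in> carrier_mat (n * m) (n' * m')"
  by (simp add: kron_def)

lemma tr_kron:
  assumes "A \<in> carrier_mat n n" "B \<in> carrier_mat m m"
  shows "tr (kron A B) = tr A * tr B"
  using assms kron_carrier[OF assms]
  by (simp add: tr_def sum_lessThan_mult_nat kron_index sum_product)

definition ket_bra :: "nat \<Rightarrow> (nat \<Rightarrow> complex) \<Rightarrow> complex mat" where
  "ket_bra n \<psi> = mat n n (\<lambda>(i, j). \<psi> i * cnj (\<psi> j))"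

lemma ket_bra_carrier: "ket_bra n \<psi> \<in> carrier_mat n n"
  by (simp add: ket_bra_def)

lemma tr_ket_bra: "tr (ket_bra n \<psi>) = of_real (\<Sum>i<n. (cmod (\<psi> i))\<^sup>2)"
  by (simp add: tr_def ket_bra_def flip: complex_norm_square)

lemma psd_ket_bra: "psd n (ket_bra n \<psi>)"
  unfolding psd_def
proof (intro conjI ballI ket_bra_carrier)
  fix v :: "complex vec" assume v: "v \<in> carrier_vec n"
  define w where "w = (\<Sum>q<n. cnj (\<psi> q) * v $ q)"
  have "scalar_prod (map_vec cnj v) (ket_bra n \<psi> *\<^sub>v v)
      = (\<Sum>p<n. \<Sum>q<n. (cnj (v $ p) * \<psi> p) * (cnj (\<psi> q) * v $ q))"
    unfolding quadratic_form_eq[OF ket_bra_carrier v] by (simp add: ket_bra_def mult_ac)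
  also have "\<dots> = cnj w * w"
    by (simp add: w_def sum_product mult.commute)
  also have "\<dots> = of_real ((cmod w)\<^sup>2)"
    by (simp only: complex_norm_square mult.commute)
  finally have "scalar_prod (map_vec cnj v) (ket_bra n \<psi> *\<^sub>v v) = of_real ((cmod w)\<^sup>2)" .
  then show "Im (scalar_prod (map_vec cnj v) (ket_bra n \<psi> *\<^sub>v v)) = 0"
    "0 \<le> Re (scalar_prod (map_vec cnj v) (ket_bra n \<psi> *\<^sub>v v))"
    by simp_all
qed

lemma density_ket_bra: "(\<Sum>i<n. (cmod (\<psi> i))\<^sup>2) = 1 \<Longrightarrow> density n (ket_bra n \<psi>)"
  by (simp add: density_def psd_ket_bra tr_ket_bra)

lemma psd_kron_ket_bra:
  assumes B: "psd m B"
  shows "psd (n * m) (kron (ket_bra n \<psi>) B)"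
  unfolding psd_def
proof (intro conjI ballI)
  have Bc: "B \<in> carrier_mat m m" using B by (simp add: psd_def)
  show Kc: "kron (ket_bra n \<psi>) B \<in> carrier_mat (n * m) (n * m)"
    by (rule kron_carrier[OF ket_bra_carrier Bc])
  fix v :: "complex vec" assume v: "v \<in> carrier_vec (n * m)"
  define w where "w = vec m (\<lambda>l. \<Sum>j<n. cnj (\<psi> j) * v $ (j * m + l))"
  have w: "w \<in> carrier_vec m" by (simp add: w_def)
  define T where "T i k j l = (\<psi> i * cnj (v $ (i * m + k))) * B $$ (k, l) * (cnj (\<psi> j) * v $ (j * m + l))"
    for i k j l
  have "scalar_prod (map_vec cnj v) (kron (ket_bra n \<psi>) B *\<^sub>v v)
      = (\<Sum>i<n. \<Sum>k<m. \<Sum>j<n. \<Sum>l<m. T i k j l)"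
    unfolding quadratic_form_eq[OF Kc v] sum_lessThan_mult_nat
    by (simp add: kron_index[OF ket_bra_carrier Bc]) (simp add: ket_bra_def T_def mult_ac)
  also have "\<dots> = (\<Sum>k<m. \<Sum>l<m. \<Sum>i<n. \<Sum>j<n. T i k j l)"
    by (subst sum.swap) (simp add: sum.swap[of _ "{..<n}" "{..<m}"])
  also have "\<dots> = scalar_prod (map_vec cnj w) (B *\<^sub>v w)"
    unfolding quadratic_form_eq[OF Bc w]
    by (simp add: w_def T_def sum_distrib_left sum_distrib_right mult_ac)
  finally have qf: "scalar_prod (map_vec cnj v) (kron (ket_bra n \<psi>) B *\<^sub>v v)
      = scalar_prod (map_vec cnj w) (B *\<^sub>v w)" .
  show "Im (scalar_prod (map_vec cnj v) (kron (ket_bra n \<psi>) B *\<^sub>v v)) = 0"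
    "0 \<le> Re (scalar_prod (map_vec cnj v) (kron (ket_bra n \<psi>) B *\<^sub>v v))"
    using B w unfolding qf psd_def by simp_all
qed

lemma density_kron_ket_bra:
  assumes "(\<Sum>i<n. (cmod (\<psi> i))\<^sup>2) = 1" "density m \<tau>"
  shows "density (n * m) (kron (ket_bra n \<psi>) \<tau>)"
  using assms psd_kron_ket_bra[of m \<tau> n \<psi>] tr_kron[OF ket_bra_carrier, of \<tau> m n \<psi>]
  by (simp add: density_def psd_def tr_ket_bra)

lemma unitary_row_inner:
  assumes "unitary n U" "y < n" "y' < n"
  shows "(\<Sum>k<n. U $$ (y, k) * cnj (U $$ (y', k))) = (if y = y' then 1 else 0)"
proof -
  have U: "U \<in> carrier_mat n n" "U * dagger U = 1\<^sub>m n" using assms(1) by (simp_all add: unitary_def)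
  have "(\<Sum>k<n. U $$ (y, k) * cnj (U $$ (y', k))) = (U * dagger U) $$ (y, y')"
    using assms(2,3) U(1) unfolding dagger_def
    by (auto simp: scalar_prod_def atLeast0LessThan intro!: sum.cong)
  also have "\<dots> = (if y = y' then 1 else 0)" using assms(2,3) U(2) by simp
  finally show ?thesis .
qed

lemma unitary_single_row_support:
  assumes U: "unitary n U"
    and single: "\<And>y a b. y < n \<Longrightarrow> a < n \<Longrightarrow> b < n \<Longrightarrow> a \<noteq> b \<Longrightarrow> U $$ (y, a) = 0 \<or> U $$ (y, b) = 0"
  obtains f where "bij_betw f {..<n} {..<n}"
    and "\<And>y k. y < n \<Longrightarrow> k < n \<Longrightarrow> k \<noteq> f y \<Longrightarrow> U $$ (y, k) = 0"
    and "\<And>y. y < n \<Longrightarrow> cmod (U $$ (y, f y)) = 1"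
proof -
  have "\<exists>k<n. U $$ (y, k) \<noteq> 0" if "y < n" for y
    using unitary_row_inner[OF U that that] by (metis (no_types, lifting) mult_eq_0_iff sum.neutral lessThan_iff zero_neq_one)
  then obtain f where f: "\<And>y. y < n \<Longrightarrow> f y < n \<and> U $$ (y, f y) \<noteq> 0"
    by metis
  have off: "U $$ (y, k) = 0" if "y < n" "k < n" "k \<noteq> f y" for y k
    using single f that by blast
  have inner: "U $$ (y, f y) * cnj (U $$ (y', f y)) = (if y = y' then 1 else 0)"
    if "y < n" "y' < n" for y y'
  proof -
    have "(\<Sum>k<n. U $$ (y, k) * cnj (U $$ (y', k))) = U $$ (y, f y) * cnj (U $$ (y', f y))"
      using f[OF that(1)] off[OF that(1)] by (subst sum.remove[of _ "f y"]) (auto intro!: sum.neutral)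
    then show ?thesis using unitary_row_inner[OF U that] by simp
  qed
  have "inj_on f {..<n}"
  proof (rule inj_onI)
    fix y y' assume "y \<in> {..<n}" "y' \<in> {..<n}" "f y = f y'"
    then show "y = y'"
      using inner[of y y'] f by (metis lessThan_iff complex_cnj_zero_iff mult_eq_0_iff)
  qed
  moreover have "f ` {..<n} \<subseteq> {..<n}" using f by auto
  ultimately have "bij_betw f {..<n} {..<n}"
    by (simp add: bij_betw_def endo_inj_surj)
  moreover have "cmod (U $$ (y, f y)) = 1" if "y < n" for y
    using inner[OF that that] complex_mod_mult_cnj[of "U $$ (y, f y)"] by (simp add: abs_square_eq_1)
  ultimately show ?thesis using that off by blast
qed

lemma exp_Arg_unimodular: "cmod z = 1 \<Longrightarrow> exp (\<i> * complex_of_real (Arg z)) = z"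
  by (metis cis_Arg cis_conv_exp norm_zero sgn_eq div_by_1 of_real_1 zero_neq_one)

lemma incoherent_unitaryI:
  assumes U: "unitary n U"
    and single: "\<And>y a b. y < n \<Longrightarrow> a < n \<Longrightarrow> b < n \<Longrightarrow> a \<noteq> b \<Longrightarrow> U $$ (y, a) = 0 \<or> U $$ (y, b) = 0"
  shows "incoherent_unitary n U"
proof -
  obtain f where f: "bij_betw f {..<n} {..<n}"
    and off: "\<And>y k. y < n \<Longrightarrow> k < n \<Longrightarrow> k \<noteq> f y \<Longrightarrow> U $$ (y, k) = 0"
    and unimodular: "\<And>y. y < n \<Longrightarrow> cmod (U $$ (y, f y)) = 1"
    using unitary_single_row_support[OF U single] by blast
  define \<pi> where "\<pi> = the_inv_into {..<n} f"
  define \<theta> where "\<theta> j = Arg (U $$ (\<pi> j, j))" for j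
  have \<pi>: "bij_betw \<pi> {..<n} {..<n}"
    unfolding \<pi>_def using f by (rule bij_betw_the_inv_into)
  have f_\<pi>: "f (\<pi> j) = j" if "j < n" for j
    unfolding \<pi>_def using f that by (simp add: bij_betw_def f_the_inv_into_f)
  have \<pi>_f: "\<pi> (f i) = i" if "i < n" for i
    unfolding \<pi>_def using f that by (simp add: bij_betw_def the_inv_into_f_f)
  have "U $$ (i, j) = (if i = \<pi> j then exp (\<i> * complex_of_real (\<theta> j)) else 0)"
    if "i < n" "j < n" for i j
  proof (cases "j = f i")
    case True
    then show ?thesis using that \<pi>_f unimodular by (simp add: \<theta>_def exp_Arg_unimodular)
  next
    case False
    then show ?thesis using that off f_\<pi> by metis
  qed
  then have "U = mat n n (\<lambda>(i, j). if i = \<pi> j then exp (\<i> * complex_of_real (\<theta> j)) else 0)"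
    using U by (auto simp: unitary_def intro!: eq_matI)
  then show ?thesis unfolding incoherent_unitary_def using \<pi> by blast
qed

lemma diag_conj_ket_bra:
  assumes "U \<in> carrier_mat n n" "y < n"
  shows "(U * ket_bra n \<psi> * dagger U) $$ (y, y) = of_real ((cmod (\<Sum>j<n. U $$ (y, j) * \<psi> j))\<^sup>2)"
proof -
  have "(U * ket_bra n \<psi> * dagger U) $$ (y, y)
      = (\<Sum>k<n. (\<Sum>j<n. U $$ (y, j) * \<psi> j) * cnj (\<psi> k) * cnj (U $$ (y, k)))"
    using assms
    by (simp add: ket_bra_def dagger_def scalar_prod_def atLeast0LessThan sum_distrib_left sum_distrib_right mult_ac)
  also have "\<dots> = (\<Sum>j<n. U $$ (y, j) * \<psi> j) * cnj (\<Sum>k<n. U $$ (y, k) * \<psi> k)"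
    by (simp add: sum_distrib_left mult_ac)
  finally show ?thesis by (simp only: complex_norm_square)
qed

lemma dephase_kron_ket_bra_eq:
  assumes "\<And>i. i < n \<Longrightarrow> cmod (\<psi> i) = cmod (\<phi> i)" and "B \<in> carrier_mat m m"
  shows "dephase (n * m) (kron (ket_bra n \<psi>) B) = dephase (n * m) (kron (ket_bra n \<phi>) B)"
proof -
  have "kron (ket_bra n \<psi>) B $$ (p, p) = kron (ket_bra n \<phi>) B $$ (p, p)" if "p < n * m" for p
  proof -
    have "p div m < n"
      using that by (simp add: less_mult_imp_div_less)
    then show ?thesis
      using that assms by (simp add: kron_def ket_bra_def flip: complex_norm_square)
  qed
  then show ?thesis by (auto simp: dephase_def)
qed

lemma mult_cnj_eq_0_by_polarization:
  fixes u v :: complex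
  assumes "cmod (u + v) = cmod (u - v)" and "cmod (u + \<i> * v) = cmod (u - \<i> * v)"
  shows "u * cnj v = 0"
proof -
  have "(u + v) * cnj (u + v) = (u - v) * cnj (u - v)"
    using assms(1) by (metis complex_norm_square)
  then have "2 * (u * cnj v + v * cnj u) = 0"
    by (simp add: algebra_simps)
  then have re: "u * cnj v + v * cnj u = 0"
    by (metis mult_eq_0_iff zero_neq_numeral)
  have "(u + \<i> * v) * cnj (u + \<i> * v) = (u - \<i> * v) * cnj (u - \<i> * v)"
    using assms(2) by (metis complex_norm_square)
  then have "2 * \<i> * (v * cnj u - u * cnj v) = 0"
    by (simp add: algebra_simps)
  then have im: "v * cnj u = u * cnj v"
    by (metis complex_i_not_zero eq_iff_diff_eq_0 mult_eq_0_iff zero_neq_numeral)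
  show ?thesis
    using re unfolding im by simp
qed

lemma single_support_of_modulus_invariance:
  fixes r :: "nat \<Rightarrow> complex"
  assumes invariant: "\<And>\<psi> \<phi>. (\<Sum>i<n. (cmod (\<psi> i))\<^sup>2) = 1 \<Longrightarrow> (\<Sum>i<n. (cmod (\<phi> i))\<^sup>2) = 1 \<Longrightarrow>
      (\<And>i. i < n \<Longrightarrow> cmod (\<psi> i) = cmod (\<phi> i)) \<Longrightarrow>
      cmod (\<Sum>j<n. r j * \<psi> j) = cmod (\<Sum>j<n. r j * \<phi> j)"
    and ab: "a < n" "b < n" "a \<noteq> b"
  shows "r a = 0 \<or> r b = 0"
proof -
  define s where "s = 1 / sqrt 2"
  define \<psi> where "\<psi> c j = of_real s * ((if j = a then 1 else 0) + (if j = b then c else 0))"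
    for c :: complex and j
  have unit: "(\<Sum>i<n. (cmod (\<psi> c i))\<^sup>2) = 1" if "cmod c = 1" for c
  proof -
    have "s\<^sup>2 = 1 / 2" by (simp add: s_def power_divide)
    then have "(cmod (\<psi> c i))\<^sup>2 = (if i = a then 1 / 2 else 0) + (if i = b then 1 / 2 else 0)" for i
      using ab(3) that by (simp add: \<psi>_def norm_mult power_mult_distrib)
    then show ?thesis using ab(1,2) by (simp add: sum.distrib)
  qed
  have row: "(\<Sum>j<n. r j * \<psi> c j) = of_real s * (r a + c * r b)" for c
  proof -
    have "r j * \<psi> c j = (if j = a then of_real s * r a else 0) + (if j = b then of_real s * c * r b else 0)" for j
      using ab(3) by (simp add: \<psi>_def)
    then show ?thesis using ab(1,2) by (simp add: sum.distrib distrib_left)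
  qed
  have "cmod (r a + c * r b) = cmod (r a - c * r b)" if "cmod c = 1" for c
  proof -
    have "cmod (\<Sum>j<n. r j * \<psi> c j) = cmod (\<Sum>j<n. r j * \<psi> (- c) j)"
      by (rule invariant[OF unit[OF that] unit]) (use that ab(3) in \<open>simp_all add: \<psi>_def\<close>)
    then show ?thesis by (simp add: row norm_mult norm_divide s_def)
  qed
  from this[of 1] this[of \<i>] have "r a * cnj (r b) = 0"
    by (intro mult_cnj_eq_0_by_polarization) simp_all
  then show ?thesis by simp
qed

lemma implemented_unitary_row_modulus_eq:
  assumes covariant: "\<forall>\<rho>. density (n * m) \<rho> \<longrightarrow> dephase n (E (dephase (n * m) \<rho>)) = dephase n (E \<rho>)"
    and \<tau>: "density m \<tau>"
    and implements: "\<forall>\<rho>. density n \<rho> \<longrightarrow> E (kron \<rho> \<tau>) = U * \<rho> * dagger U"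
    and U: "U \<in> carrier_mat n n" and y: "y < n"
    and \<psi>: "(\<Sum>i<n. (cmod (\<psi> i))\<^sup>2) = 1" and \<phi>: "(\<Sum>i<n. (cmod (\<phi> i))\<^sup>2) = 1"
    and same_moduli: "\<And>i. i < n \<Longrightarrow> cmod (\<psi> i) = cmod (\<phi> i)"
  shows "cmod (\<Sum>j<n. U $$ (y, j) * \<psi> j) = cmod (\<Sum>j<n. U $$ (y, j) * \<phi> j)"
proof -
  have \<tau>_carrier: "\<tau> \<in> carrier_mat m m" using \<tau> by (simp add: density_def psd_def)
  have "dephase n (U * ket_bra n \<psi> * dagger U) = dephase n (E (kron (ket_bra n \<psi>) \<tau>))"
    using implements density_ket_bra[OF \<psi>] by simp
  also have "\<dots> = dephase n (E (dephase (n * m) (kron (ket_bra n \<psi>) \<tau>)))"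
    using covariant density_kron_ket_bra[OF \<psi> \<tau>] by simp
  also have "\<dots> = dephase n (E (dephase (n * m) (kron (ket_bra n \<phi>) \<tau>)))"
    using dephase_kron_ket_bra_eq[OF same_moduli \<tau>_carrier] by simp
  also have "\<dots> = dephase n (E (kron (ket_bra n \<phi>) \<tau>))"
    using covariant density_kron_ket_bra[OF \<phi> \<tau>] by simp
  also have "\<dots> = dephase n (U * ket_bra n \<phi> * dagger U)"
    using implements density_ket_bra[OF \<phi>] by simp
  finally have "dephase n (U * ket_bra n \<psi> * dagger U) $$ (y, y) = dephase n (U * ket_bra n \<phi> * dagger U) $$ (y, y)"
    by simp
  then have "(cmod (\<Sum>j<n. U $$ (y, j) * \<psi> j))\<^sup>2 = (cmod (\<Sum>j<n. U $$ (y, j) * \<phi> j))\<^sup>2"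
    using y by (simp add: dephase_def diag_conj_ket_bra[OF U y] del: of_real_power)
  then show ?thesis
    by (simp add: power2_eq_iff_nonneg)
qed

theorem lemma5:
  fixes n1 n2 :: nat and E :: "complex mat \<Rightarrow> complex mat" and \<tau> U :: "complex mat"
  assumes "channel (n1 * n2) n1 E"
    and "\<forall>\<rho>. density (n1 * n2) \<rho> \<longrightarrow>
           dephase n1 (E (dephase (n1 * n2) \<rho>)) = dephase n1 (E \<rho>)"
    and "density n2 \<tau>"
    and "coherent_unitary n1 U"
  shows "\<not> (\<forall>\<rho>. density n1 \<rho> \<longrightarrow> E (kron \<rho> \<tau>) = U * \<rho> * dagger U)"
proof
  assume implements: "\<forall>\<rho>. density n1 \<rho> \<longrightarrow> E (kron \<rho> \<tau>) = U * \<rho> * dagger U"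
  have U: "unitary n1 U" and not_incoherent: "\<not> incoherent_unitary n1 U"
    using assms(4) by (simp_all add: coherent_unitary_def)
  then have U_carrier: "U \<in> carrier_mat n1 n1" by (simp add: unitary_def)
  have "U $$ (y, a) = 0 \<or> U $$ (y, b) = 0"
    if "y < n1" "a < n1" "b < n1" "a \<noteq> b" for y a b
    using implemented_unitary_row_modulus_eq[OF assms(2,3) implements U_carrier \<open>y < n1\<close>]
    by (intro single_support_of_modulus_invariance[OF _ that(2-4)]) blast
  then have "incoherent_unitary n1 U"
    by (rule incoherent_unitaryI[OF U])
  with not_incoherent show False ..
qed

end
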